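(* Let $L>0$, $H\in(0,\infty]$, $D\ge1$, and let $v_1,\dots,v_{D+1}\in\mathbb R^m$ be orthonormal. With $\ell=\min\{L,\ H/(10(D+1)^{1.5})\}$, $\eta=10(D+1)^{1.5}\ell$, $\tilde f(x)=\max_{1\le r\le D+1}(\ell v_r^\top x-5\ell^2(r-1)/\eta)$ and $f(x)=\inf_y\{\tilde f(y)+\frac\eta2\|y-x\|^2\}$, every $x\in\mathbb R^m$ with $|v_{D+1}^\top x|\le\ell/\eta$ satisfies \[f(x)-\min_{\|x'\|\le1}f(x')\ \ge\ \min\Big\{\frac{L}{2\sqrt{D+1}},\ \frac{H}{20(D+1)^2}\Big\}.\] *)

theory Defs
  imports "HOL-Analysis.Analysis"
begin

definition hard_ell :: "real \<Rightarrow> ereal \<Rightarrow> nat \<Rightarrow> real" where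
  "hard_ell L H D = real_of_ereal (min (ereal L) (H / ereal (10 * real (D+1) powr 1.5)))"

definition hard_eta :: "real \<Rightarrow> ereal \<Rightarrow> nat \<Rightarrow> real" where
  "hard_eta L H D = 10 * real (D+1) powr 1.5 * hard_ell L H D"

definition hard_ftilde :: "real \<Rightarrow> real \<Rightarrow> nat \<Rightarrow> (nat \<Rightarrow> 'a::euclidean_space) \<Rightarrow> 'a \<Rightarrow> real" where
  "hard_ftilde ell eta D v x =
     Max ((\<lambda>r. ell * (v r \<bullet> x) - 5 * ell^2 * real (r - 1) / eta) ` {1..D+1})"

definition moreau_env :: "real \<Rightarrow> ('a::real_normed_vector \<Rightarrow> real) \<Rightarrow> 'a \<Rightarrow> real" where
  "moreau_env eta g x = (INF y. g y + eta / 2 * (norm (y - x))^2)"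

end

theory Submission
  imports Defs
begin

text \<open>
  Every piece of \<open>f~\<close> dominates the last one, \<open>\<ell> v_{D+1}\<bullet>y - 5\<ell>\<^sup>2D/\<eta>\<close>, and completing the
  square in \<open>\<parallel>y - x\<parallel>\<close> shows that the Moreau envelope loses at most \<open>\<ell>\<^sup>2/(2\<eta>)\<close> against this
  linear function; on the slab \<open>|v_{D+1}\<bullet>x| \<le> \<ell>/\<eta>\<close> this gives \<open>f(x) \<ge> -\<ell>/(2\<surd>(D+1))\<close>.
  At the unit vector \<open>x' = -(v_1 + \<dots> + v_{D+1})/\<surd>(D+1)\<close>, on the other hand, every piece of
  \<open>f~\<close> is at most \<open>-\<ell>/\<surd>(D+1)\<close>, and \<open>f \<le> f~\<close>. So the gap is at least \<open>\<ell>/(2\<surd>(D+1))\<close>,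
  which dominates the claimed bound by the choice of \<open>\<ell>\<close>.
\<close>

lemma completing_square_lower_bound:
  fixes a e t :: "'a::linordered_field"
  assumes "e > 0"
  shows "- (a^2 / (2 * e)) \<le> - a * t + e / 2 * t^2"
proof -
  have "0 \<le> (e * t - a)^2 / (2 * e)" using assms by simp
  also have "\<dots> = - a * t + e / 2 * t^2 + a^2 / (2 * e)"
    using assms by (simp add: field_simps power2_eq_square)
  finally show ?thesis by simp
qed

lemma powr_three_halves: "x \<ge> 0 \<Longrightarrow> x powr 1.5 = x * sqrt x"
proof -
  assume "x \<ge> 0"
  have "x powr (1 + 1/2) = x powr 1 * x powr (1/2)" by (rule powr_add)
  with \<open>x \<ge> 0\<close> show ?thesis by (simp add: powr_half_sqrt)
qed

lemma inner_sum_orthonormal: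
  fixes v :: "'i \<Rightarrow> 'a::real_inner"
  assumes "finite I" and "\<forall>r\<in>I. \<forall>s\<in>I. v r \<bullet> v s = (if r = s then 1 else 0)" and "r \<in> I"
  shows "v r \<bullet> (\<Sum>q\<in>I. v q) = 1"
proof -
  have "v r \<bullet> (\<Sum>q\<in>I. v q) = (\<Sum>q\<in>I. if r = q then 1 else 0)"
    unfolding inner_sum_right using assms(2,3) by (intro sum.cong) auto
  also have "\<dots> = 1" using assms(1,3) by simp
  finally show ?thesis .
qed

lemma norm_sum_orthonormal:
  fixes v :: "'i \<Rightarrow> 'a::real_inner"
  assumes "finite I" and "\<forall>r\<in>I. \<forall>s\<in>I. v r \<bullet> v s = (if r = s then 1 else 0)"
  shows "norm (\<Sum>q\<in>I. v q) = sqrt (real (card I))"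
proof -
  have "(\<Sum>q\<in>I. v q) \<bullet> (\<Sum>q\<in>I. v q) = (\<Sum>q\<in>I. v q \<bullet> (\<Sum>q\<in>I. v q))"
    by (rule inner_sum_left)
  also have "\<dots> = real (card I)" using inner_sum_orthonormal[OF assms] by simp
  finally show ?thesis by (simp add: norm_eq_sqrt_inner)
qed

lemma moreau_env_greatest:
  assumes "\<And>y. c \<le> g y + e / 2 * (norm (y - x))^2"
  shows "c \<le> moreau_env e g x"
  unfolding moreau_env_def by (rule cINF_greatest) (use assms in auto)

lemma moreau_env_le:
  assumes "\<And>y. c \<le> g y + e / 2 * (norm (y - x))^2"
  shows "moreau_env e g x \<le> g x"
proof -
  have "bdd_below (range (\<lambda>y. g y + e / 2 * (norm (y - x))^2))"
    using assms by (intro bdd_belowI2) blast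
  from cINF_lower[OF this, of x] show ?thesis unfolding moreau_env_def by simp
qed

lemma hard_ftilde_ge:
  assumes "r \<in> {1..D+1}"
  shows "l * (v r \<bullet> y) - 5 * l^2 * real (r - 1) / e \<le> hard_ftilde l e D v y"
  unfolding hard_ftilde_def by (rule Max_ge) (use assms in auto)

lemma hard_ftilde_le_iff:
  "hard_ftilde l e D v y \<le> c \<longleftrightarrow>
     (\<forall>r\<in>{1..D+1}. l * (v r \<bullet> y) - 5 * l^2 * real (r - 1) / e \<le> c)"
  unfolding hard_ftilde_def by (subst Max_le_iff) auto

lemma hard_ftilde_proximal_ge:
  assumes "l \<ge> 0" and "e > 0" and "norm (v (D+1)) = 1"
  shows "l * (v (D+1) \<bullet> x) - l^2 / (2 * e) - 5 * l^2 * real D / e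
           \<le> hard_ftilde l e D v y + e / 2 * (norm (y - x))^2"
proof -
  define t where "t = norm (y - x)"
  have "- t \<le> v (D+1) \<bullet> (y - x)"
    using norm_cauchy_schwarz[of "- v (D+1)" "y - x"] assms(3) by (simp add: t_def)
  then have "l * (v (D+1) \<bullet> x - t) \<le> l * (v (D+1) \<bullet> y)"
    using assms(1) by (intro mult_left_mono) (simp_all add: inner_diff_right)
  then have "l * (v (D+1) \<bullet> x) - l * t \<le> l * (v (D+1) \<bullet> y)"
    by (simp add: right_diff_distrib)
  moreover have "- (l^2 / (2 * e)) \<le> - l * t + e / 2 * t^2"
    using completing_square_lower_bound assms(2) by blast
  moreover have "l * (v (D+1) \<bullet> y) - 5 * l^2 * real D / e \<le> hard_ftilde l e D v y"
    using hard_ftilde_ge[of "D+1" D l v y e] by simp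
  ultimately show ?thesis unfolding t_def by linarith
qed

lemma moreau_hard_ftilde_ge:
  assumes "l \<ge> 0" and "e > 0" and "norm (v (D+1)) = 1"
  shows "l * (v (D+1) \<bullet> x) - l^2 / (2 * e) - 5 * l^2 * real D / e
           \<le> moreau_env e (hard_ftilde l e D v) x"
  by (rule moreau_env_greatest) (rule hard_ftilde_proximal_ge[where v=v and D=D, OF assms])

lemma moreau_hard_ftilde_le:
  assumes "l \<ge> 0" and "e > 0" and "norm (v (D+1)) = 1"
  shows "moreau_env e (hard_ftilde l e D v) x \<le> hard_ftilde l e D v x"
  by (rule moreau_env_le) (rule hard_ftilde_proximal_ge[where v=v and D=D, OF assms])

lemma moreau_hard_ftilde_ge_on_slab:
  fixes v :: "nat \<Rightarrow> 'a::euclidean_space" and D :: nat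
  defines "s \<equiv> sqrt (real (D+1))"
  assumes "l > 0" and "e = 10 * real (D+1) * s * l" and "norm (v (D+1)) = 1"
    and "- (l / e) \<le> v (D+1) \<bullet> x"
  shows "- (l / (2 * s)) \<le> moreau_env e (hard_ftilde l e D v) x"
proof -
  have s: "s > 0" unfolding s_def by simp
  have e: "e > 0" using assms(2,3) s by simp
  have "l^2 / e = l / (10 * real (D+1) * s)"
    using assms(2,3) by (simp add: power2_eq_square)
  moreover have "10 * real (D+1) * s > 0" using s by simp
  ultimately have "- (l / (2 * s)) = - (l^2 / e) * (5 * real D + 5)"
    using s by (simp add: field_simps)
  also have "\<dots> \<le> - (l^2 / e) * (3 / 2 + 5 * real D)"
    using e by (intro mult_left_mono_neg) simp_all
  also have "\<dots> = l * (- (l / e)) - l^2 / (2 * e) - 5 * l^2 * real D / e"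
    using e by (simp add: field_simps power2_eq_square)
  also have "\<dots> \<le> l * (v (D+1) \<bullet> x) - l^2 / (2 * e) - 5 * l^2 * real D / e"
    using mult_left_mono[OF assms(5), of l] assms(2) by simp
  also have "\<dots> \<le> moreau_env e (hard_ftilde l e D v) x"
    using moreau_hard_ftilde_ge assms(2,4) e by (metis less_imp_le)
  finally show ?thesis .
qed

lemma INF_cball_moreau_hard_ftilde_le:
  fixes v :: "nat \<Rightarrow> 'a::euclidean_space"
  assumes "l \<ge> 0" and "e > 0"
    and orth: "\<forall>r\<in>{1..D+1}. \<forall>s\<in>{1..D+1}. v r \<bullet> v s = (if r = s then 1 else 0)"
  shows "(INF z\<in>cball 0 1. moreau_env e (hard_ftilde l e D v) z) \<le> - (l / sqrt (real (D+1)))"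
proof -
  define s where "s = sqrt (real (D+1))"
  define F where "F = moreau_env e (hard_ftilde l e D v)"
  define x' where "x' = - (1 / s) *\<^sub>R (\<Sum>q\<in>{1..D+1}. v q)"
  have s: "s > 0" unfolding s_def by simp
  have nv: "norm (v (D+1)) = 1" using orth by (simp add: norm_eq_1)
  have "norm x' = 1"
    using norm_sum_orthonormal[OF _ orth] s by (simp add: x'_def s_def)
  then have x': "x' \<in> cball 0 1" by simp
  have "bdd_below (F ` cball 0 1)"
  proof (rule bdd_belowI2)
    fix z :: 'a assume "z \<in> cball 0 1"
    then have "- 1 \<le> v (D+1) \<bullet> z"
      using norm_cauchy_schwarz[of "- v (D+1)" z] nv by simp
    then have "- l \<le> l * (v (D+1) \<bullet> z)"
      using assms(1) mult_left_mono by fastforce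
    then show "- l - l^2 / (2 * e) - 5 * l^2 * real D / e \<le> F z"
      using moreau_hard_ftilde_ge[where v=v and D=D, OF assms(1,2) nv, of z] unfolding F_def by linarith
  qed
  then have "(INF z\<in>cball 0 1. F z) \<le> F x'" using x' by (rule cINF_lower)
  also have "\<dots> \<le> hard_ftilde l e D v x'"
    unfolding F_def by (rule moreau_hard_ftilde_le[where v=v and D=D, OF assms(1,2) nv])
  also have "\<dots> \<le> - (l / s)"
  proof (subst hard_ftilde_le_iff, intro ballI)
    fix r assume r: "r \<in> {1..D+1}"
    have "v r \<bullet> x' = - (1 / s)"
      using inner_sum_orthonormal[OF _ orth r] by (simp add: x'_def)
    moreover have "0 \<le> 5 * l^2 * real (r - 1) / e" using assms(2) by simp
    ultimately show "l * (v r \<bullet> x') - 5 * l^2 * real (r - 1) / e \<le> - (l / s)" by simp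
  qed
  finally show ?thesis unfolding F_def s_def .
qed

lemma hard_eta_eq: "hard_eta L H D = 10 * real (D+1) * sqrt (real (D+1)) * hard_ell L H D"
  unfolding hard_eta_def by (subst powr_three_halves) simp_all

lemma hard_ell_pos_and_bound:
  assumes "L > 0" and "H > 0"
  shows "hard_ell L H D > 0"
    and "min (ereal (L / (2 * sqrt (real (D+1))))) (H / ereal (20 * real (D+1)^2))
           \<le> ereal (hard_ell L H D / (2 * sqrt (real (D+1))))"
proof -
  define s where "s = sqrt (real (D+1))"
  define K where "K = 10 * real (D+1) * s"
  have s: "s > 0" unfolding s_def by simp
  have K: "K > 0" unfolding K_def using s by simp
  have K_powr: "10 * real (D+1) powr 1.5 = K"
    unfolding K_def s_def by (subst powr_three_halves) simp_all
  have "hard_ell L H D > 0 \<and>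
      min (ereal (L / (2 * s))) (H / ereal (20 * real (D+1)^2)) \<le> ereal (hard_ell L H D / (2 * s))"
  proof (cases H)
    case (real h)
    with assms(2) have h: "h > 0" by simp
    have ell: "hard_ell L H D = min L (h / K)"
      unfolding hard_ell_def K_powr real using K by (simp add: min_def)
    have "K * (2 * s) = 20 * real (D+1) * (s * s)"
      unfolding K_def by (simp add: algebra_simps)
    then have "20 * real (D+1)^2 = K * (2 * s)"
      unfolding s_def by (simp add: power2_eq_square)
    then have "H / ereal (20 * real (D+1)^2) = ereal (h / K / (2 * s))"
      unfolding real by simp
    moreover have "min (L / (2 * s)) (h / K / (2 * s)) = min L (h / K) / (2 * s)"
      using s by (simp add: min_divide_distrib_right)
    ultimately show ?thesis using ell h K assms(1) by (auto simp: min_def)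
  next
    case PInf
    then have "hard_ell L H D = L" unfolding hard_ell_def K_powr using K by simp
    with assms(1) show ?thesis by simp
  next
    case MInf
    with assms(2) show ?thesis by simp
  qed
  then show "hard_ell L H D > 0"
    and "min (ereal (L / (2 * sqrt (real (D+1))))) (H / ereal (20 * real (D+1)^2))
           \<le> ereal (hard_ell L H D / (2 * sqrt (real (D+1))))"
    unfolding s_def by simp_all
qed

theorem lemma5:
  fixes L :: real and H :: ereal and D :: nat and v :: "nat \<Rightarrow> 'a::euclidean_space"
    and x :: 'a
  assumes "L > 0" and "H > 0" and "D \<ge> 1"
    and "\<forall>r\<in>{1..D+1}. \<forall>s\<in>{1..D+1}. v r \<bullet> v s = (if r = s then 1 else 0)"
    and "\<bar>v (D+1) \<bullet> x\<bar> \<le> hard_ell L H D / hard_eta L H D"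
  shows "ereal (moreau_env (hard_eta L H D) (hard_ftilde (hard_ell L H D) (hard_eta L H D) D v) x
           - (INF x'\<in>cball 0 1. moreau_env (hard_eta L H D)
                 (hard_ftilde (hard_ell L H D) (hard_eta L H D) D v) x'))
         \<ge> min (ereal (L / (2 * sqrt (real (D+1))))) (H / ereal (20 * real (D+1)^2))"
proof -
  define l where "l = hard_ell L H D"
  define e where "e = hard_eta L H D"
  define s where "s = sqrt (real (D+1))"
  define F where "F = moreau_env e (hard_ftilde l e D v)"
  have l: "l > 0" unfolding l_def using hard_ell_pos_and_bound(1)[OF assms(1,2)] .
  have e: "e = 10 * real (D+1) * s * l" unfolding e_def l_def s_def by (rule hard_eta_eq)
  have nv: "norm (v (D+1)) = 1" using assms(4) by (simp add: norm_eq_1)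
  have "- (l / (2 * s)) \<le> F x"
    unfolding F_def s_def
    by (rule moreau_hard_ftilde_ge_on_slab[where v=v and D=D, OF l e[unfolded s_def] nv])
      (use assms(5) in \<open>simp add: l_def e_def\<close>)
  moreover have "(INF z\<in>cball 0 1. F z) \<le> - (l / s)"
    unfolding F_def s_def
    by (rule INF_cball_moreau_hard_ftilde_le[OF _ _ assms(4)]) (use l e in \<open>simp_all add: s_def\<close>)
  ultimately have "l / (2 * s) \<le> F x - (INF z\<in>cball 0 1. F z)"
    by (simp add: field_simps)
  with hard_ell_pos_and_bound(2)[OF assms(1,2), of D] show ?thesis
    unfolding F_def l_def e_def s_def by (meson ereal_less_eq(3) order.trans)
qed

end
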